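(* Let $\varphi\in C^2(\overline{H^2})\cap C^\infty(H^2)$ with $\varphi\ge 0$, $\varphi\not\equiv0$, $\varphi(0,y)=0$ for all $y$, and $\varphi_{xx}+\varphi_{yy}-x^{-1}\varphi_x=0$ on $H^2$. Then the function $f=x^{-2}\varphi$ (defined on $H^2$) extends to a function in $C^0(\overline{H^2})\cap C^\infty(H^2)$, this extension satisfies $f_{xx}+f_{yy}+3x^{-1}f_x=0$ on $H^2$, and $f>0$ everywhere on $\overline{H^2}$ (including on $\{x=0\}$).
   Context: $H^2=\{(x,y)\in\mathbb{R}^2: x>0\}$ is the open right half-plane and $\overline{H^2}=\{x\ge0\}$ its closure. *)

theory Defs
  imports "HOL-Analysis.Analysis"
begin

definition pdx :: "(real \<times> real \<Rightarrow> real) \<Rightarrow> real \<times> real \<Rightarrow> real" where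
  "pdx f = (\<lambda>(x, y). deriv (\<lambda>t. f (t, y)) x)"

definition pdy :: "(real \<times> real \<Rightarrow> real) \<Rightarrow> real \<times> real \<Rightarrow> real" where
  "pdy f = (\<lambda>(x, y). deriv (\<lambda>t. f (x, t)) y)"

fun iterpd :: "bool list \<Rightarrow> (real \<times> real \<Rightarrow> real) \<Rightarrow> real \<times> real \<Rightarrow> real" where
  "iterpd [] f = f"
| "iterpd (d # ds) f = iterpd ds (if d then pdx f else pdy f)"

definition partials_exist_at :: "(real \<times> real \<Rightarrow> real) \<Rightarrow> real \<times> real \<Rightarrow> bool" where
  "partials_exist_at g p \<longleftrightarrow>
     (\<lambda>t. g (t, snd p)) differentiable (at (fst p)) \<and>
     (\<lambda>t. g (fst p, t)) differentiable (at (snd p))"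

definition Ck_on :: "nat \<Rightarrow> (real \<times> real) set \<Rightarrow> (real \<times> real \<Rightarrow> real) \<Rightarrow> bool" where
  "Ck_on k U f \<longleftrightarrow>
     (\<forall>ds. length ds \<le> k \<longrightarrow> continuous_on U (iterpd ds f)) \<and>
     (\<forall>ds. length ds < k \<longrightarrow> (\<forall>p\<in>U. partials_exist_at (iterpd ds f) p))"

definition Cinf_on :: "(real \<times> real) set \<Rightarrow> (real \<times> real \<Rightarrow> real) \<Rightarrow> bool" where
  "Cinf_on U f \<longleftrightarrow> (\<forall>k. Ck_on k U f)"

definition Ck_closure :: "nat \<Rightarrow> (real \<times> real) set \<Rightarrow> (real \<times> real \<Rightarrow> real) \<Rightarrow> bool" where
  "Ck_closure k U f \<longleftrightarrow> Ck_on k U f \<and> continuous_on (closure U) f \<and>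
     (\<forall>ds. length ds \<le> k \<longrightarrow>
        (\<exists>g. continuous_on (closure U) g \<and> (\<forall>p\<in>U. g p = iterpd ds f p)))"

definition H2 :: "(real \<times> real) set" where
  "H2 = {p. fst p > 0}"

definition H2bar :: "(real \<times> real) set" where
  "H2bar = {p. fst p \<ge> 0}"

end

theory Submission
  imports Defs
begin

text \<open>Since \<open>\<phi>\<close> vanishes on \<open>x = 0\<close> and the equation says \<open>\<phi>\<^sub>x = x (\<phi>\<^sub>x\<^sub>x + \<phi>\<^sub>y\<^sub>y)\<close>, Cauchy's mean
  value theorem writes \<open>\<phi>(x, y) / x\<^sup>2\<close> as half the (continuously extended) Laplacian of \<open>\<phi>\<close> at an
  intermediate point; this gives the continuous extension of \<open>f = \<phi> / x\<^sup>2\<close> to \<open>x = 0\<close>, and the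
  equation for \<open>f\<close> is a direct computation. Positivity comes from a minimum principle for
  \<open>L = \<Delta> + 3 x\<^sup>-\<^sup>1 \<partial>\<^sub>x\<close>: comparing \<open>f\<close> with a Gaussian annulus barrier centred where \<open>f > 0\<close>
  bounds \<open>f\<close> below by a function that is positive on \<open>H2\<close> and on its boundary line. The minimum
  principle needs no boundary values on \<open>x = 0\<close>, because adding the \<open>L\<close>-harmonic function
  \<open>\<epsilon> x\<^sup>-\<^sup>2\<close> keeps minima away from that line.\<close>

section \<open>Partial derivatives and \<open>C\<^sup>k\<close> functions\<close>

lemma partials_exist_atD:
  assumes "partials_exist_at F p"
  shows "((\<lambda>t. F (t, snd p)) has_real_derivative pdx F p) (at (fst p))"
    and "((\<lambda>t. F (fst p, t)) has_real_derivative pdy F p) (at (snd p))"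
  using assms unfolding partials_exist_at_def pdx_def pdy_def
  by (auto simp: case_prod_beta DERIV_deriv_iff_real_differentiable)

lemma eventually_eq_on_lines:
  assumes "open U" "\<forall>p\<in>U. F p = G p" "(x, y) \<in> U"
  shows "\<forall>\<^sub>F t in nhds x. F (t, y) = G (t, y)"
    and "\<forall>\<^sub>F t in nhds y. F (x, t) = G (x, t)"
proof -
  have "((\<lambda>t. (t, y)) \<longlongrightarrow> (x, y)) (nhds x)" "((\<lambda>t. (x, t)) \<longlongrightarrow> (x, y)) (nhds y)"
    by (auto intro!: tendsto_intros simp: filterlim_ident)
  from this[THEN topological_tendstoD, OF assms(1,3)]
  show "\<forall>\<^sub>F t in nhds x. F (t, y) = G (t, y)" "\<forall>\<^sub>F t in nhds y. F (x, t) = G (x, t)"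
    by (simp_all add: assms(2) eventually_mono)
qed

lemma pdx_pdy_cong_open:
  assumes "open U" "\<forall>p\<in>U. F p = G p" "p \<in> U"
  shows "pdx F p = pdx G p" "pdy F p = pdy G p"
proof -
  obtain x y where p: "p = (x, y)" by fastforce
  note ev = eventually_eq_on_lines[OF assms(1,2), of x y]
  show "pdx F p = pdx G p" "pdy F p = pdy G p"
    unfolding p pdx_def pdy_def using deriv_cong_ev[OF ev(1) refl] deriv_cong_ev[OF ev(2) refl] assms(3) p
    by simp_all
qed

lemma partials_exist_at_cong_open:
  assumes "open U" "\<forall>p\<in>U. F p = G p" "p \<in> U"
  shows "partials_exist_at F p \<longleftrightarrow> partials_exist_at G p"
proof -
  obtain x y where p: "p = (x, y)" by fastforce
  note ev = eventually_eq_on_lines[OF assms(1,2), of x y]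
  show ?thesis
    unfolding p partials_exist_at_def fst_conv snd_conv
      DERIV_deriv_iff_real_differentiable[symmetric]
    using DERIV_cong_ev[OF refl ev(1) refl] DERIV_cong_ev[OF refl ev(2) refl]
      deriv_cong_ev[OF ev(1) refl] deriv_cong_ev[OF ev(2) refl] assms(3) p
    by simp
qed

lemma iterpd_cong_open:
  assumes "open U" "\<forall>p\<in>U. F p = G p"
  shows "\<forall>p\<in>U. iterpd ds F p = iterpd ds G p"
  using assms(2)
proof (induction ds arbitrary: F G)
  case (Cons d ds)
  then show ?case
    using Cons.IH[of "if d then pdx F else pdy F" "if d then pdx G else pdy G"]
      pdx_pdy_cong_open[OF assms(1) Cons.prems] by simp
qed simp

lemma Ck_on_cong_open:
  assumes "open U" "\<forall>p\<in>U. F p = G p"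
  shows "Ck_on k U F \<longleftrightarrow> Ck_on k U G"
proof -
  have "continuous_on U (iterpd ds F) \<longleftrightarrow> continuous_on U (iterpd ds G)"
    and "p \<in> U \<Longrightarrow> partials_exist_at (iterpd ds F) p \<longleftrightarrow> partials_exist_at (iterpd ds G) p"
    for ds p
    using iterpd_cong_open[OF assms, of ds]
    by (auto intro!: continuous_on_cong partials_exist_at_cong_open[OF assms(1)])
  then show ?thesis unfolding Ck_on_def by auto
qed

lemma Ck_on_0_iff: "Ck_on 0 U F \<longleftrightarrow> continuous_on U F"
  unfolding Ck_on_def by auto

lemma Ck_on_SucD: "Ck_on (Suc k) U F \<Longrightarrow> Ck_on k U F"
  unfolding Ck_on_def by auto

lemma Ck_on_Suc_iff:
  "Ck_on (Suc k) U F \<longleftrightarrow> continuous_on U F \<and> (\<forall>p\<in>U. partials_exist_at F p)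
     \<and> Ck_on k U (pdx F) \<and> Ck_on k U (pdy F)"
proof
  assume H: "Ck_on (Suc k) U F"
  have c: "\<And>ds. length ds \<le> Suc k \<Longrightarrow> continuous_on U (iterpd ds F)"
    and p: "\<And>ds. length ds < Suc k \<Longrightarrow> \<forall>p\<in>U. partials_exist_at (iterpd ds F) p"
    using H unfolding Ck_on_def by auto
  show "continuous_on U F \<and> (\<forall>p\<in>U. partials_exist_at F p) \<and> Ck_on k U (pdx F) \<and> Ck_on k U (pdy F)"
    unfolding Ck_on_def
    using c[of "[]"] p[of "[]"] c[of "True # _"] p[of "True # _"] c[of "False # _"] p[of "False # _"]
    by simp
next
  assume H: "continuous_on U F \<and> (\<forall>p\<in>U. partials_exist_at F p) \<and> Ck_on k U (pdx F) \<and> Ck_on k U (pdy F)"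
  then show "Ck_on (Suc k) U F" unfolding Ck_on_def
  proof (intro conjI allI impI)
    fix ds :: "bool list"
    show "length ds \<le> Suc k \<Longrightarrow> continuous_on U (iterpd ds F)"
      and "length ds < Suc k \<Longrightarrow> \<forall>p\<in>U. partials_exist_at (iterpd ds F) p"
      using H unfolding Ck_on_def by (cases ds; auto)+
  qed
qed

lemma partial_derivatives_add:
  assumes "partials_exist_at F p" "partials_exist_at G p"
  shows "partials_exist_at (\<lambda>p. F p + G p) p"
    and "pdx (\<lambda>p. F p + G p) p = pdx F p + pdx G p"
    and "pdy (\<lambda>p. F p + G p) p = pdy F p + pdy G p"
proof -
  have "((\<lambda>t. F (t, snd p) + G (t, snd p)) has_real_derivative pdx F p + pdx G p) (at (fst p))"
       "((\<lambda>t. F (fst p, t) + G (fst p, t)) has_real_derivative pdy F p + pdy G p) (at (snd p))"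
    using partials_exist_atD[OF assms(1)] partials_exist_atD[OF assms(2)] by (auto intro: DERIV_add)
  then show "partials_exist_at (\<lambda>p. F p + G p) p" "pdx (\<lambda>p. F p + G p) p = pdx F p + pdx G p"
    "pdy (\<lambda>p. F p + G p) p = pdy F p + pdy G p"
    unfolding partials_exist_at_def pdx_def pdy_def
    by (auto simp: case_prod_beta DERIV_imp_deriv real_differentiable_def)
qed

lemma partial_derivatives_mult:
  assumes "partials_exist_at F p" "partials_exist_at G p"
  shows "partials_exist_at (\<lambda>p. F p * G p) p"
    and "pdx (\<lambda>p. F p * G p) p = pdx F p * G p + F p * pdx G p"
    and "pdy (\<lambda>p. F p * G p) p = pdy F p * G p + F p * pdy G p"
proof -
  have "((\<lambda>t. F (t, snd p) * G (t, snd p)) has_real_derivative pdx F p * G p + F p * pdx G p) (at (fst p))"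
       "((\<lambda>t. F (fst p, t) * G (fst p, t)) has_real_derivative pdy F p * G p + F p * pdy G p) (at (snd p))"
    using partials_exist_atD[OF assms(1)] partials_exist_atD[OF assms(2)]
    by (auto intro!: derivative_eq_intros)
  then show "partials_exist_at (\<lambda>p. F p * G p) p"
    "pdx (\<lambda>p. F p * G p) p = pdx F p * G p + F p * pdx G p"
    "pdy (\<lambda>p. F p * G p) p = pdy F p * G p + F p * pdy G p"
    unfolding partials_exist_at_def pdx_def pdy_def
    by (auto simp: case_prod_beta DERIV_imp_deriv real_differentiable_def)
qed

lemma Ck_on_add:
  assumes "open U" "Ck_on k U F" "Ck_on k U G"
  shows "Ck_on k U (\<lambda>p. F p + G p)"
  using assms(2,3)
proof (induction k arbitrary: F G)
  case 0 then show ?case by (auto simp: Ck_on_0_iff intro: continuous_on_add)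
next
  case (Suc k)
  then have pF: "\<forall>p\<in>U. partials_exist_at F p" and pG: "\<forall>p\<in>U. partials_exist_at G p"
    by (simp_all add: Ck_on_Suc_iff)
  have "Ck_on k U (pdx (\<lambda>p. F p + G p)) \<longleftrightarrow> Ck_on k U (\<lambda>p. pdx F p + pdx G p)"
    "Ck_on k U (pdy (\<lambda>p. F p + G p)) \<longleftrightarrow> Ck_on k U (\<lambda>p. pdy F p + pdy G p)"
    using partial_derivatives_add(2,3) pF pG by (simp_all add: Ck_on_cong_open[OF assms(1)])
  with Suc show ?case
    using partial_derivatives_add(1) pF pG by (simp add: Ck_on_Suc_iff continuous_on_add)
qed

lemma Ck_on_mult:
  assumes "open U" "Ck_on k U F" "Ck_on k U G"
  shows "Ck_on k U (\<lambda>p. F p * G p)"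
  using assms(2,3)
proof (induction k arbitrary: F G)
  case 0 then show ?case by (auto simp: Ck_on_0_iff intro: continuous_on_mult)
next
  case (Suc k)
  then have pF: "\<forall>p\<in>U. partials_exist_at F p" and pG: "\<forall>p\<in>U. partials_exist_at G p"
    and F: "Ck_on k U F" "Ck_on k U (pdx F)" "Ck_on k U (pdy F)"
    and G: "Ck_on k U G" "Ck_on k U (pdx G)" "Ck_on k U (pdy G)"
    using Ck_on_SucD[of k U F] Ck_on_SucD[of k U G] by (simp_all add: Ck_on_Suc_iff)
  have "Ck_on k U (pdx (\<lambda>p. F p * G p)) \<longleftrightarrow> Ck_on k U (\<lambda>p. pdx F p * G p + F p * pdx G p)"
    "Ck_on k U (pdy (\<lambda>p. F p * G p)) \<longleftrightarrow> Ck_on k U (\<lambda>p. pdy F p * G p + F p * pdy G p)"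
    using partial_derivatives_mult(2,3) pF pG by (simp_all add: Ck_on_cong_open[OF assms(1)])
  moreover have "Ck_on k U (\<lambda>p. pdx F p * G p + F p * pdx G p)"
    "Ck_on k U (\<lambda>p. pdy F p * G p + F p * pdy G p)"
    using F G by (simp_all add: Ck_on_add[OF assms(1)] Suc.IH)
  moreover have "continuous_on U (\<lambda>p. F p * G p)"
    using Suc.prems by (simp add: Ck_on_Suc_iff continuous_on_mult)
  ultimately show ?case
    using partial_derivatives_mult(1) pF pG by (simp add: Ck_on_Suc_iff)
qed

lemma has_real_derivative_divide_power:
  fixes x c :: real
  assumes "x \<noteq> 0"
  shows "((\<lambda>t. c / t ^ n) has_real_derivative - (real n * c) / x ^ Suc n) (at x)"
proof (induction n)
  case (Suc n)
  have "((\<lambda>t. 1 / t) has_real_derivative - 1 / x\<^sup>2) (at x)"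
    using assms by (auto intro!: derivative_eq_intros simp: power2_eq_square)
  from DERIV_mult[OF Suc.IH this]
  have "((\<lambda>t. c / t ^ Suc n) has_real_derivative
      (- (real n * c) / x ^ Suc n) * (1 / x) + (c / x ^ n) * (- 1 / x\<^sup>2)) (at x)"
    by (simp add: mult.commute)
  moreover have "(- (real n * c) / x ^ Suc n) * (1 / x) + (c / x ^ n) * (- 1 / x\<^sup>2)
     = - (real (Suc n) * c) / x ^ Suc (Suc n)"
    using assms by (simp add: field_simps power2_eq_square)
  ultimately show ?case by simp
qed simp

lemma open_H2: "open H2"
  unfolding H2_def by (intro open_Collect_less continuous_intros)

lemma closure_H2: "closure H2 = H2bar"
proof -
  have "closure {p. (1::real, 0::real) \<bullet> p > 0} = {p. (1::real, 0::real) \<bullet> p \<ge> 0}"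
    by (rule closure_halfspace_gt) (simp add: zero_prod_def)
  then show ?thesis unfolding H2_def H2bar_def by (simp add: inner_prod_def)
qed

lemma Ck_on_divide_fst_power: "Ck_on k H2 (\<lambda>p. c / fst p ^ n)"
proof (induction k arbitrary: n c)
  case 0 then show ?case
    by (auto simp: Ck_on_0_iff H2_def intro!: continuous_intros)
next
  case (Suc k)
  have deriv: "((\<lambda>t. c / fst (t, snd p) ^ n) has_real_derivative - (real n * c) / fst p ^ Suc n)
      (at (fst p))" if "p \<in> H2" for p
    using has_real_derivative_divide_power[of "fst p" c n] that by (simp add: H2_def)
  then have "\<forall>p\<in>H2. partials_exist_at (\<lambda>p. c / fst p ^ n) p"
    by (auto simp: partials_exist_at_def real_differentiable_def)
  moreover have "Ck_on k H2 (pdx (\<lambda>p. c / fst p ^ n)) \<longleftrightarrow> Ck_on k H2 (\<lambda>p. - (real n * c) / fst p ^ Suc n)"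
    using deriv by (intro Ck_on_cong_open[OF open_H2]) (auto simp: pdx_def DERIV_imp_deriv)
  moreover have "Ck_on k H2 (pdy (\<lambda>p. c / fst p ^ n)) \<longleftrightarrow> Ck_on k H2 (\<lambda>p. 0 / fst p ^ 0)"
    by (intro Ck_on_cong_open[OF open_H2]) (auto simp: pdy_def)
  moreover have "continuous_on H2 (\<lambda>p. c / fst p ^ n)"
    by (auto simp: H2_def intro!: continuous_intros)
  ultimately show ?case
    using Suc.IH[of "- (real n * c)" "Suc n"] Suc.IH[of 0 0] unfolding Ck_on_Suc_iff by blast
qed

lemma Ck_on_2_line_derivatives:
  assumes "Ck_on 2 U F" "(x, y) \<in> U"
  shows "((\<lambda>t. F (t, y)) has_real_derivative pdx F (x, y)) (at x)"
    and "((\<lambda>t. pdx F (t, y)) has_real_derivative pdx (pdx F) (x, y)) (at x)"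
    and "((\<lambda>t. F (x, t)) has_real_derivative pdy F (x, y)) (at y)"
    and "((\<lambda>t. pdy F (x, t)) has_real_derivative pdy (pdy F) (x, y)) (at y)"
proof -
  have "\<And>ds. length ds < 2 \<Longrightarrow> partials_exist_at (iterpd ds F) (x, y)"
    using assms unfolding Ck_on_def by blast
  from this[of "[]"] this[of "[True]"] this[of "[False]"] show
    "((\<lambda>t. F (t, y)) has_real_derivative pdx F (x, y)) (at x)"
    "((\<lambda>t. pdx F (t, y)) has_real_derivative pdx (pdx F) (x, y)) (at x)"
    "((\<lambda>t. F (x, t)) has_real_derivative pdy F (x, y)) (at y)"
    "((\<lambda>t. pdy F (x, t)) has_real_derivative pdy (pdy F) (x, y)) (at y)"
    by (auto dest: partials_exist_atD)
qed

section \<open>A minimum principle for \<open>\<Delta> + 3 x\<^sup>-\<^sup>1 \<partial>\<^sub>x\<close>\<close>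

lemma local_min_second_derivative_nonneg:
  fixes h h' :: "real \<Rightarrow> real"
  assumes e: "e > 0"
    and d1: "\<And>t. \<bar>t - a\<bar> < e \<Longrightarrow> (h has_real_derivative h' t) (at t)"
    and d2: "(h' has_real_derivative c) (at a)"
    and min: "\<And>t. \<bar>t - a\<bar> < e \<Longrightarrow> h a \<le> h t"
  shows "h' a = 0" and "c \<ge> 0"
proof -
  show h'a: "h' a = 0"
    by (rule DERIV_local_min[OF d1[of a] e]) (use e min in \<open>auto simp: abs_minus_commute\<close>)
  show "c \<ge> 0"
  proof (rule ccontr)
    assume "\<not> c \<ge> 0"
    from DERIV_neg_dec_right[OF d2] this obtain d where d: "d > 0"
      "\<And>s. s > 0 \<Longrightarrow> s < d \<Longrightarrow> h' (a + s) < h' a" by force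
    define s where "s = min d e / 2"
    have s: "s > 0" "s < d" "s < e" using d e by (auto simp: s_def)
    obtain z where z: "a < z" "z < a + s" "h (a + s) - h a = s * h' z"
      using MVT2[of a "a + s" h h'] s d1 by auto
    have "h' z < 0" using d(2)[of "z - a"] z s h'a by auto
    then have "s * h' z < 0" using s(1) by (simp add: mult_pos_neg)
    then have "h (a + s) < h a" using z(3) by simp
    with min[of "a + s"] s show False by auto
  qed
qed

lemma local_min_line_derivatives:
  assumes e: "e > 0"
    and min: "\<And>z. dist z (x, y) < e \<Longrightarrow> h (x, y) \<le> h z"
    and dx: "\<And>t. \<bar>t - x\<bar> < e \<Longrightarrow> ((\<lambda>s. h (s, y)) has_real_derivative hx t) (at t)"
    and dxx: "(hx has_real_derivative hxx) (at x)"
    and dy: "\<And>t. \<bar>t - y\<bar> < e \<Longrightarrow> ((\<lambda>s. h (x, s)) has_real_derivative hy t) (at t)"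
    and dyy: "(hy has_real_derivative hyy) (at y)"
  shows "hx x = 0" "hxx \<ge> 0" "hyy \<ge> 0"
proof -
  have "h (x, y) \<le> h (t, y)" if "\<bar>t - x\<bar> < e" for t
    using min[of "(t, y)"] that by (simp add: dist_Pair_Pair dist_real_def)
  from local_min_second_derivative_nonneg[OF e dx dxx this] show "hx x = 0" "hxx \<ge> 0" by auto
  have "h (x, y) \<le> h (x, t)" if "\<bar>t - y\<bar> < e" for t
    using min[of "(x, t)"] that by (simp add: dist_Pair_Pair dist_real_def)
  from local_min_second_derivative_nonneg[OF e dy dyy this] show "hyy \<ge> 0" by auto
qed

lemma penalized_local_min:
  fixes g :: "real \<times> real \<Rightarrow> real"
  assumes K: "compact K" and cont: "continuous_on K g"
    and p0: "p0 \<in> K" "fst p0 > 0" "g p0 < 0"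
  obtains p e \<epsilon> where "p \<in> K" "g p < 0" "0 < e" "e < fst p"
    "\<And>z. z \<in> K \<Longrightarrow> dist z p < e \<Longrightarrow> g p + \<epsilon> / (fst p)\<^sup>2 \<le> g z + \<epsilon> / (fst z)\<^sup>2"
proof -
  obtain B where B: "\<And>p. p \<in> K \<Longrightarrow> \<bar>g p\<bar> \<le> B"
    using compact_imp_bounded[OF compact_continuous_image[OF cont K]]
    unfolding bounded_iff by auto
  have "B \<ge> 0" using B[OF p0(1)] by simp
  \<comment> \<open>\<open>\<epsilon>\<close> makes \<open>h p0 = g p0 / 2 < 0\<close>, and \<open>\<delta>\<close> makes \<open>h \<ge> 1\<close> on the line \<open>x = \<delta>\<close>, so the
    minimum of \<open>h\<close> over \<open>K \<inter> {x \<ge> \<delta>}\<close> lies strictly to the right of that line.\<close>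
  define \<epsilon> where "\<epsilon> = - g p0 * (fst p0)\<^sup>2 / 2"
  have \<epsilon>: "\<epsilon> > 0" using p0 by (simp add: \<epsilon>_def mult_neg_pos)
  define \<delta> where "\<delta> = min (fst p0 / 2) (sqrt (\<epsilon> / (B + 1)))"
  have \<delta>: "\<delta> > 0" "\<delta> < fst p0" using p0 \<epsilon> \<open>B \<ge> 0\<close> by (auto simp: \<delta>_def)
  have "\<delta>\<^sup>2 \<le> (sqrt (\<epsilon> / (B + 1)))\<^sup>2"
    using \<delta> by (intro power_mono) (auto simp: \<delta>_def)
  then have "\<delta>\<^sup>2 \<le> \<epsilon> / (B + 1)" using \<epsilon> \<open>B \<ge> 0\<close> by simp
  then have big: "B + 1 \<le> \<epsilon> / \<delta>\<^sup>2" using \<delta> \<open>B \<ge> 0\<close> by (simp add: field_simps)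
  define h where "h z = g z + \<epsilon> / (fst z)\<^sup>2" for z
  define K' where "K' = K \<inter> {z. fst z \<ge> \<delta>}"
  have "compact K'" unfolding K'_def
    by (intro compact_Int_closed K closed_Collect_le continuous_intros)
  moreover have "continuous_on K' h" unfolding h_def
    using \<delta> by (intro continuous_intros continuous_on_subset[OF cont]) (auto simp: K'_def)
  moreover have p0K': "p0 \<in> K'" using p0 \<delta> by (auto simp: K'_def)
  ultimately obtain p where p: "p \<in> K'" "\<And>z. z \<in> K' \<Longrightarrow> h p \<le> h z"
    using continuous_attains_inf[of K' h] by blast
  have "h p0 = g p0 / 2" using p0 by (simp add: h_def \<epsilon>_def field_simps)
  then have hp: "h p < 0" using p(2)[OF p0K'] p0 by simp
  have "fst p \<noteq> \<delta>"
  proof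
    assume "fst p = \<delta>"
    moreover have "- B \<le> g p" using B[of p] p(1) by (auto simp: K'_def)
    ultimately have "h p \<ge> - B + (B + 1)" using big by (simp add: h_def)
    with hp show False by simp
  qed
  with p(1) have "fst p > \<delta>" by (simp add: K'_def)
  show thesis
  proof
    show "p \<in> K" using p(1) by (simp add: K'_def)
    have "\<epsilon> / (fst p)\<^sup>2 > 0" using \<epsilon> \<delta> \<open>fst p > \<delta>\<close> by simp
    then show "g p < 0" using hp by (simp add: h_def)
    show "0 < fst p - \<delta>" "fst p - \<delta> < fst p" using \<open>fst p > \<delta>\<close> \<delta> by auto
    fix z assume "z \<in> K" "dist z p < fst p - \<delta>"
    moreover have "\<bar>fst z - fst p\<bar> \<le> dist z p"
      by (metis dist_fst_le dist_real_def)
    ultimately have "z \<in> K'" by (auto simp: K'_def)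
    from p(2)[OF this] show "g p + \<epsilon> / (fst p)\<^sup>2 \<le> g z + \<epsilon> / (fst z)\<^sup>2" by (simp add: h_def)
  qed
qed

lemma operator_nonneg_at_penalized_min:
  fixes g gx gxx gy gyy :: "real \<times> real \<Rightarrow> real"
  assumes e: "0 < e" "e \<le> x"
    and min: "\<And>z. dist z (x, y) < e \<Longrightarrow> g (x, y) + \<epsilon> / x\<^sup>2 \<le> g z + \<epsilon> / (fst z)\<^sup>2"
    and der: "\<And>z. dist z (x, y) < e \<Longrightarrow>
        ((\<lambda>t. g (t, snd z)) has_real_derivative gx z) (at (fst z)) \<and>
        ((\<lambda>t. gx (t, snd z)) has_real_derivative gxx z) (at (fst z)) \<and>
        ((\<lambda>t. g (fst z, t)) has_real_derivative gy z) (at (snd z)) \<and>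
        ((\<lambda>t. gy (fst z, t)) has_real_derivative gyy z) (at (snd z))"
  shows "gxx (x, y) + gyy (x, y) + 3 * gx (x, y) / x \<ge> 0"
proof -
  have line_x: "dist (t, y) (x, y) < e" if "\<bar>t - x\<bar> < e" for t
    using that by (simp add: dist_Pair_Pair dist_real_def)
  have line_y: "dist (x, t) (x, y) < e" if "\<bar>t - y\<bar> < e" for t
    using that by (simp add: dist_Pair_Pair dist_real_def)
  have min_xy: "g (x, y) + \<epsilon> / (fst (x, y))\<^sup>2 \<le> g z + \<epsilon> / (fst z)\<^sup>2" if "dist z (x, y) < e" for z
    using min[OF that] by simp
  have dx: "((\<lambda>s. g (s, y) + \<epsilon> / (fst (s, y))\<^sup>2) has_real_derivative gx (t, y) - 2 * \<epsilon> / t ^ 3) (at t)"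
    if "\<bar>t - x\<bar> < e" for t
  proof -
    have "t \<noteq> 0" using that e by linarith
    then show ?thesis
      using der[OF line_x[OF that]] has_real_derivative_divide_power[of t \<epsilon> 2]
      by (auto dest: DERIV_add)
  qed
  have dxx: "((\<lambda>t. gx (t, y) - 2 * \<epsilon> / t ^ 3) has_real_derivative gxx (x, y) + 6 * \<epsilon> / x ^ 4) (at x)"
    using DERIV_diff[OF _ has_real_derivative_divide_power[of x "2 * \<epsilon>" 3]] der[of "(x, y)"] e
    by (simp add: eval_nat_numeral)
  have dy: "((\<lambda>s. g (x, s) + \<epsilon> / (fst (x, s))\<^sup>2) has_real_derivative gy (x, t)) (at t)"
    if "\<bar>t - y\<bar> < e" for t
    using DERIV_add[OF _ DERIV_const[of "\<epsilon> / x\<^sup>2"]] der[OF line_y[OF that]] by simp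
  have dyy: "((\<lambda>t. gy (x, t)) has_real_derivative gyy (x, y)) (at y)"
    using der[of "(x, y)"] e by simp
  from local_min_line_derivatives[OF e(1) min_xy dx dxx dy dyy]
  have "gx (x, y) = 2 * \<epsilon> / x ^ 3" "gxx (x, y) + 6 * \<epsilon> / x ^ 4 \<ge> 0" "gyy (x, y) \<ge> 0"
    by simp_all
  \<comment> \<open>The penalty \<open>\<epsilon> x\<^sup>-\<^sup>2\<close> solves the homogeneous equation, so it drops out of the operator.\<close>
  moreover from this(1) have "3 * gx (x, y) / x = 6 * \<epsilon> / x ^ 4"
    using e by (simp add: field_simps eval_nat_numeral)
  ultimately show ?thesis by linarith
qed

lemma strict_supersolution_nonneg:
  fixes g gx gxx gy gyy :: "real \<times> real \<Rightarrow> real"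
  assumes K: "compact K" and cont: "continuous_on K g"
    and bdry: "\<And>p. p \<in> K \<Longrightarrow> p \<notin> interior K \<Longrightarrow> fst p > 0 \<Longrightarrow> g p \<ge> 0"
    and der: "\<And>p. p \<in> interior K \<Longrightarrow> fst p > 0 \<Longrightarrow>
        ((\<lambda>t. g (t, snd p)) has_real_derivative gx p) (at (fst p)) \<and>
        ((\<lambda>t. gx (t, snd p)) has_real_derivative gxx p) (at (fst p)) \<and>
        ((\<lambda>t. g (fst p, t)) has_real_derivative gy p) (at (snd p)) \<and>
        ((\<lambda>t. gy (fst p, t)) has_real_derivative gyy p) (at (snd p))"
    and super: "\<And>p. p \<in> interior K \<Longrightarrow> fst p > 0 \<Longrightarrow> gxx p + gyy p + 3 * gx p / fst p < 0"
    and p: "p \<in> K" "fst p > 0"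
  shows "g p \<ge> 0"
proof (rule ccontr)
  assume "\<not> g p \<ge> 0"
  then have "g p < 0" by simp
  obtain q e \<epsilon> where q: "q \<in> K" "g q < 0" "0 < e" "e < fst q"
    and min: "\<And>z. z \<in> K \<Longrightarrow> dist z q < e \<Longrightarrow> g q + \<epsilon> / (fst q)\<^sup>2 \<le> g z + \<epsilon> / (fst z)\<^sup>2"
    by (rule penalized_local_min[OF K cont p \<open>g p < 0\<close>]) (rule that)
  have "fst q > 0" using q(3,4) by linarith
  then have "q \<in> interior K" using bdry[of q] q(1,2) by fastforce
  then obtain e0 where "e0 > 0" "ball q e0 \<subseteq> interior K"
    using open_contains_ball_eq open_interior by blast
  define e' where "e' = min e e0"
  have e': "0 < e'" "e' \<le> fst q" using q(3,4) \<open>e0 > 0\<close> by (auto simp: e'_def)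
  have ball: "z \<in> interior K" "fst z > 0" if "dist z q < e'" for z
  proof -
    show "z \<in> interior K" using that \<open>ball q e0 \<subseteq> interior K\<close> by (auto simp: e'_def dist_commute)
    have "\<bar>fst z - fst q\<bar> \<le> dist z q" by (metis dist_fst_le dist_real_def)
    then show "fst z > 0" using that q(4) unfolding e'_def by linarith
  qed
  have "gxx (fst q, snd q) + gyy (fst q, snd q) + 3 * gx (fst q, snd q) / fst q \<ge> 0"
  proof (rule operator_nonneg_at_penalized_min[OF e'])
    fix z assume "dist z (fst q, snd q) < e'"
    then have z: "dist z q < e'" by simp
    show "g (fst q, snd q) + \<epsilon> / (fst q)\<^sup>2 \<le> g z + \<epsilon> / (fst z)\<^sup>2"
      using min[of z] z ball(1)[OF z] interior_subset by (auto simp: e'_def)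
    show "((\<lambda>t. g (t, snd z)) has_real_derivative gx z) (at (fst z)) \<and>
        ((\<lambda>t. gx (t, snd z)) has_real_derivative gxx z) (at (fst z)) \<and>
        ((\<lambda>t. g (fst z, t)) has_real_derivative gy z) (at (snd z)) \<and>
        ((\<lambda>t. gy (fst z, t)) has_real_derivative gyy z) (at (snd z))"
      using der ball z by blast
  qed
  with super[of q] ball[of q] e' show False by simp
qed

section \<open>A Gaussian annulus barrier\<close>

text \<open>The rate \<open>3 / r\<^sup>2\<close> makes the barrier a strict subsolution of \<open>\<Delta> + 3 x\<^sup>-\<^sup>1 \<partial>\<^sub>x\<close> outside the
  inner circle: there the second-order term is at least \<open>12 \<alpha>\<close> (with \<open>\<alpha> = 3 / r\<^sup>2\<close>), while the
  remaining terms are bounded by \<open>10 \<alpha>\<close> as soon as the centre lies in \<open>H2\<close>.\<close>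

definition annulus_barrier :: "real \<times> real \<Rightarrow> real \<Rightarrow> real \<Rightarrow> real \<times> real \<Rightarrow> real" where
  "annulus_barrier q r R z =
     (exp (- 3 * (dist z q / r)\<^sup>2) - exp (- 3 * (R / r)\<^sup>2)) / (exp (- 3) - exp (- 3 * (R / r)\<^sup>2))"

lemma annulus_barrier_denominator_pos:
  fixes r R :: real
  assumes "0 < r" "r < R"
  shows "exp (- 3) - exp (- 3 * (R / r)\<^sup>2) > 0"
proof -
  have "1 < R / r" using divide_strict_right_mono[OF assms(2,1)] assms(1) by simp
  then have "1 < (R / r)\<^sup>2" by (simp add: one_less_power)
  then show ?thesis by simp
qed

lemma annulus_barrier_inner:
  assumes "0 < r" "r < R" "dist z q = r"
  shows "annulus_barrier q r R z = 1"
  using annulus_barrier_denominator_pos[OF assms(1,2)] assms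
  by (simp add: annulus_barrier_def less_imp_neq[symmetric])

lemma annulus_barrier_outer:
  assumes "dist z q = R"
  shows "annulus_barrier q r R z = 0"
  using assms by (simp add: annulus_barrier_def)

lemma annulus_barrier_pos_iff:
  assumes "0 < r" "r < R"
  shows "0 < annulus_barrier q r R z \<longleftrightarrow> dist z q < R"
proof -
  have "exp (- 3 * (R / r)\<^sup>2) < exp (- 3 * (dist z q / r)\<^sup>2) \<longleftrightarrow> (dist z q / r)\<^sup>2 < (R / r)\<^sup>2"
    by simp
  also have "\<dots> \<longleftrightarrow> dist z q / r < R / r"
    using power_mono_iff[of "R / r" "dist z q / r" 2] assms by (auto simp: not_le[symmetric])
  also have "\<dots> \<longleftrightarrow> dist z q < R"
    using assms(1) by (simp add: divide_less_cancel)
  finally show ?thesis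
    using annulus_barrier_denominator_pos[OF assms] by (simp add: annulus_barrier_def zero_less_divide_iff)
qed

lemma continuous_on_annulus_barrier: "continuous_on S (annulus_barrier q r R)"
  unfolding annulus_barrier_def divide_inverse by (intro continuous_intros)

lemma gaussian_line_derivatives:
  fixes \<alpha> c a b E t :: real
  shows "((\<lambda>t. c * (exp (- \<alpha> * ((t - a)\<^sup>2 + b)) - E)) has_real_derivative
           - 2 * \<alpha> * c * (t - a) * exp (- \<alpha> * ((t - a)\<^sup>2 + b))) (at t)"
    and "((\<lambda>t. - 2 * \<alpha> * c * (t - a) * exp (- \<alpha> * ((t - a)\<^sup>2 + b))) has_real_derivative
           c * (4 * \<alpha>\<^sup>2 * (t - a)\<^sup>2 - 2 * \<alpha>) * exp (- \<alpha> * ((t - a)\<^sup>2 + b))) (at t)"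
  by (auto intro!: derivative_eq_intros simp: algebra_simps power2_eq_square)

lemma annulus_barrier_coordinates:
  "annulus_barrier q r R (x, y) = (exp (- 3 / r\<^sup>2 * ((x - fst q)\<^sup>2 + (y - snd q)\<^sup>2))
     - exp (- 3 * (R / r)\<^sup>2)) / (exp (- 3) - exp (- 3 * (R / r)\<^sup>2))"
proof -
  have "(dist (x, y) q)\<^sup>2 = (x - fst q)\<^sup>2 + (y - snd q)\<^sup>2"
    by (simp add: dist_Pair_Pair[of x y "fst q" "snd q", simplified] dist_real_def)
  then have "- 3 * (dist (x, y) q / r)\<^sup>2 = - 3 / r\<^sup>2 * ((x - fst q)\<^sup>2 + (y - snd q)\<^sup>2)"
    by (simp add: power_divide diff_divide_distrib add_divide_distrib)
  then show ?thesis unfolding annulus_barrier_def by simp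
qed

lemma annulus_barrier_partials:
  fixes q :: "real \<times> real" and r R :: real
  defines "\<alpha> \<equiv> 3 / r\<^sup>2" and "B \<equiv> annulus_barrier q r R"
    and "\<gamma> \<equiv> \<lambda>z. exp (- 3 / r\<^sup>2 * ((fst z - fst q)\<^sup>2 + (snd z - snd q)\<^sup>2))
                    / (exp (- 3) - exp (- 3 * (R / r)\<^sup>2))"
  shows "((\<lambda>t. B (t, snd z)) has_real_derivative pdx B z) (at (fst z))"
    and "((\<lambda>t. pdx B (t, snd z)) has_real_derivative pdx (pdx B) z) (at (fst z))"
    and "((\<lambda>t. B (fst z, t)) has_real_derivative pdy B z) (at (snd z))"
    and "((\<lambda>t. pdy B (fst z, t)) has_real_derivative pdy (pdy B) z) (at (snd z))"
    and "pdx B z = - 2 * \<alpha> * (fst z - fst q) * \<gamma> z"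
    and "pdy B z = - 2 * \<alpha> * (snd z - snd q) * \<gamma> z"
    and "pdx (pdx B) z = (4 * \<alpha>\<^sup>2 * (fst z - fst q)\<^sup>2 - 2 * \<alpha>) * \<gamma> z"
    and "pdy (pdy B) z = (4 * \<alpha>\<^sup>2 * (snd z - snd q)\<^sup>2 - 2 * \<alpha>) * \<gamma> z"
proof -
  define C where "C = 1 / (exp (- 3) - exp (- 3 * (R / r)\<^sup>2))"
  define E where "E = exp (- 3 * (R / r)\<^sup>2)"
  have B_xy: "B (x, y) = C * (exp (- \<alpha> * ((x - fst q)\<^sup>2 + (y - snd q)\<^sup>2)) - E)" for x y
    unfolding B_def annulus_barrier_coordinates C_def E_def \<alpha>_def by simp
  have Bx: "(\<lambda>t. B (t, y)) = (\<lambda>t. C * (exp (- \<alpha> * ((t - fst q)\<^sup>2 + (y - snd q)\<^sup>2)) - E))" for y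
    using B_xy by simp
  have By: "(\<lambda>t. B (x, t)) = (\<lambda>t. C * (exp (- \<alpha> * ((t - snd q)\<^sup>2 + (x - fst q)\<^sup>2)) - E))" for x
    using B_xy by (simp add: add.commute)
  have \<gamma>_xy: "\<gamma> (x, y) = C * exp (- \<alpha> * ((x - fst q)\<^sup>2 + (y - snd q)\<^sup>2))" for x y
    by (simp add: \<gamma>_def C_def \<alpha>_def)
  have dx: "((\<lambda>t. B (t, y)) has_real_derivative - 2 * \<alpha> * (x - fst q) * \<gamma> (x, y)) (at x)" for x y
    using gaussian_line_derivatives(1)[of C \<alpha> "fst q" "(y - snd q)\<^sup>2" E x] by (simp add: Bx \<gamma>_xy mult_ac)
  then have pdx_B: "pdx B = (\<lambda>z. - 2 * \<alpha> * (fst z - fst q) * \<gamma> z)"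
    by (auto simp: pdx_def DERIV_imp_deriv)
  have dxx: "((\<lambda>t. pdx B (t, y)) has_real_derivative
      (4 * \<alpha>\<^sup>2 * (x - fst q)\<^sup>2 - 2 * \<alpha>) * \<gamma> (x, y)) (at x)" for x y
    using gaussian_line_derivatives(2)[of \<alpha> C "fst q" "(y - snd q)\<^sup>2" x]
    by (simp add: pdx_B \<gamma>_xy mult_ac)
  then have pdx_pdx_B: "pdx (pdx B) = (\<lambda>z. (4 * \<alpha>\<^sup>2 * (fst z - fst q)\<^sup>2 - 2 * \<alpha>) * \<gamma> z)"
    by (auto simp: pdx_def[of "pdx B"] DERIV_imp_deriv)
  have dy: "((\<lambda>t. B (x, t)) has_real_derivative - 2 * \<alpha> * (y - snd q) * \<gamma> (x, y)) (at y)" for x y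
    using gaussian_line_derivatives(1)[of C \<alpha> "snd q" "(x - fst q)\<^sup>2" E y]
    by (simp add: By \<gamma>_xy mult_ac add.commute)
  then have pdy_B: "pdy B = (\<lambda>z. - 2 * \<alpha> * (snd z - snd q) * \<gamma> z)"
    by (auto simp: pdy_def DERIV_imp_deriv)
  have dyy: "((\<lambda>t. pdy B (x, t)) has_real_derivative
      (4 * \<alpha>\<^sup>2 * (y - snd q)\<^sup>2 - 2 * \<alpha>) * \<gamma> (x, y)) (at y)" for x y
    using gaussian_line_derivatives(2)[of \<alpha> C "snd q" "(x - fst q)\<^sup>2" y]
    by (simp add: pdy_B \<gamma>_xy mult_ac add.commute)
  then have pdy_pdy_B: "pdy (pdy B) = (\<lambda>z. (4 * \<alpha>\<^sup>2 * (snd z - snd q)\<^sup>2 - 2 * \<alpha>) * \<gamma> z)"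
    by (auto simp: pdy_def[of "pdy B"] DERIV_imp_deriv)
  show "pdx B z = - 2 * \<alpha> * (fst z - fst q) * \<gamma> z" "pdy B z = - 2 * \<alpha> * (snd z - snd q) * \<gamma> z"
    "pdx (pdx B) z = (4 * \<alpha>\<^sup>2 * (fst z - fst q)\<^sup>2 - 2 * \<alpha>) * \<gamma> z"
    "pdy (pdy B) z = (4 * \<alpha>\<^sup>2 * (snd z - snd q)\<^sup>2 - 2 * \<alpha>) * \<gamma> z"
    using fun_cong[OF pdx_B, of z] fun_cong[OF pdy_B, of z]
      fun_cong[OF pdx_pdx_B, of z] fun_cong[OF pdy_pdy_B, of z] by simp_all
  then show "((\<lambda>t. B (t, snd z)) has_real_derivative pdx B z) (at (fst z))"
    "((\<lambda>t. pdx B (t, snd z)) has_real_derivative pdx (pdx B) z) (at (fst z))"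
    "((\<lambda>t. B (fst z, t)) has_real_derivative pdy B z) (at (snd z))"
    "((\<lambda>t. pdy B (fst z, t)) has_real_derivative pdy (pdy B) z) (at (snd z))"
    using dx[where x = "fst z" and y = "snd z"] dxx[where x = "fst z" and y = "snd z"]
      dy[where x = "fst z" and y = "snd z"] dyy[where x = "fst z" and y = "snd z"] by simp_all
qed

lemma annulus_barrier_strict_subsolution:
  fixes q z :: "real \<times> real" and r R :: real
  assumes r: "0 < r" "r < R" and q: "fst q > 0" and z: "fst z > 0" "r \<le> dist z q"
  defines "B \<equiv> annulus_barrier q r R"
  shows "pdx (pdx B) z + pdy (pdy B) z + 3 * pdx B z / fst z > 0"
proof -
  define \<alpha> where "\<alpha> = 3 / r\<^sup>2"
  define \<gamma> where "\<gamma> = exp (- 3 / r\<^sup>2 * ((fst z - fst q)\<^sup>2 + (snd z - snd q)\<^sup>2))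
                    / (exp (- 3) - exp (- 3 * (R / r)\<^sup>2))"
  have \<alpha>: "\<alpha> > 0" "\<alpha> * r\<^sup>2 = 3" using r(1) by (auto simp: \<alpha>_def)
  have "\<gamma> > 0" using annulus_barrier_denominator_pos[OF r] by (simp add: \<gamma>_def)
  have "r\<^sup>2 \<le> (dist z q)\<^sup>2" using z(2) r(1) by (simp add: power_mono)
  also have "(dist z q)\<^sup>2 = (fst z - fst q)\<^sup>2 + (snd z - snd q)\<^sup>2"
    by (cases z, cases q) (simp add: dist_Pair_Pair dist_real_def)
  finally have "\<alpha>\<^sup>2 * r\<^sup>2 \<le> \<alpha>\<^sup>2 * ((fst z - fst q)\<^sup>2 + (snd z - snd q)\<^sup>2)"
    by (rule mult_left_mono) simp
  moreover have "\<alpha>\<^sup>2 * r\<^sup>2 = 3 * \<alpha>"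
    using \<alpha>(2) by (simp add: power2_eq_square mult.assoc)
  moreover have "\<alpha> * ((fst z - fst q) / fst z) < \<alpha>"
    using \<alpha>(1) z(1) q by (simp add: divide_less_eq)
  ultimately have "0 < 4 * \<alpha>\<^sup>2 * ((fst z - fst q)\<^sup>2 + (snd z - snd q)\<^sup>2) - 4 * \<alpha>
      - 6 * \<alpha> * ((fst z - fst q) / fst z)"
    using \<alpha>(1) by linarith
  then have "0 < \<gamma> * (4 * \<alpha>\<^sup>2 * ((fst z - fst q)\<^sup>2 + (snd z - snd q)\<^sup>2) - 4 * \<alpha>
      - 6 * \<alpha> * ((fst z - fst q) / fst z))"
    using \<open>\<gamma> > 0\<close> by simp
  also have "\<dots> = pdx (pdx B) z + pdy (pdy B) z + 3 * pdx B z / fst z"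
    unfolding B_def annulus_barrier_partials(5-8) \<alpha>_def[symmetric] \<gamma>_def[symmetric]
    using z(1) by (simp add: field_simps)
  finally show ?thesis .
qed

definition half_annulus :: "real \<times> real \<Rightarrow> real \<Rightarrow> real \<Rightarrow> (real \<times> real) set" where
  "half_annulus q r R = {p. 0 \<le> fst p \<and> r \<le> dist p q \<and> dist p q \<le> R}"

lemma compact_half_annulus: "compact (half_annulus q r R)"
proof -
  have "bounded (half_annulus q r R)"
    by (rule bounded_subset[OF bounded_cball[of q R]]) (auto simp: half_annulus_def dist_commute)
  moreover have "closed (half_annulus q r R)" unfolding half_annulus_def
    by (intro closed_Collect_conj closed_Collect_le continuous_intros)
  ultimately show ?thesis by (simp add: compact_eq_bounded_closed)
qed

lemma half_annulus_boundary:
  assumes "p \<in> half_annulus q r R" "p \<notin> interior (half_annulus q r R)" "fst p > 0"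
  shows "dist p q = r \<or> dist p q = R"
proof -
  have "{p. 0 < fst p \<and> r < dist p q \<and> dist p q < R} \<subseteq> interior (half_annulus q r R)"
    by (rule interior_maximal)
       (auto simp: half_annulus_def intro!: open_Collect_conj open_Collect_less continuous_intros)
  with assms show ?thesis by (auto simp: half_annulus_def)
qed

lemma ge_annulus_barrier:
  fixes f :: "real \<times> real \<Rightarrow> real" and q :: "real \<times> real"
  assumes cont: "continuous_on H2bar f" and C2: "Ck_on 2 H2 f"
    and pde: "\<forall>p\<in>H2. pdx (pdx f) p + pdy (pdy f) p + 3 * pdx f p / fst p = 0"
    and nonneg: "\<forall>p\<in>H2. f p \<ge> 0"
    and q: "fst q > 0" and r: "0 < r" "r < R" and m: "m > 0"
    and inner: "\<And>p. p \<in> H2 \<Longrightarrow> dist p q = r \<Longrightarrow> m \<le> f p"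
    and z: "z \<in> H2" "r \<le> dist z q" "dist z q \<le> R"
  shows "m * annulus_barrier q r R z \<le> f z"
proof -
  define B where "B = annulus_barrier q r R"
  define K where "K = half_annulus q r R"
  have K_int: "p \<in> H2" "r \<le> dist p q" if "p \<in> interior K" "fst p > 0" for p
    using that interior_subset[of K] by (auto simp: H2_def K_def half_annulus_def)
  have "0 \<le> f z - m * B z"
  proof (rule strict_supersolution_nonneg[where K = K and g = "\<lambda>p. f p - m * B p"
        and gx = "\<lambda>p. pdx f p - m * pdx B p" and gxx = "\<lambda>p. pdx (pdx f) p - m * pdx (pdx B) p"
        and gy = "\<lambda>p. pdy f p - m * pdy B p" and gyy = "\<lambda>p. pdy (pdy f) p - m * pdy (pdy B) p"])
    show "compact K" unfolding K_def by (rule compact_half_annulus)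
    show "continuous_on K (\<lambda>p. f p - m * B p)"
      unfolding B_def using continuous_on_subset[OF cont, of K]
      by (intro continuous_intros continuous_on_annulus_barrier) (auto simp: K_def half_annulus_def H2bar_def)
    show "z \<in> K" "fst z > 0" using z by (auto simp: K_def half_annulus_def H2_def)
  next
    fix p assume "p \<in> K" "p \<notin> interior K" "fst p > 0"
    then have "dist p q = r \<or> dist p q = R" unfolding K_def by (rule half_annulus_boundary)
    moreover have "p \<in> H2" using \<open>fst p > 0\<close> by (simp add: H2_def)
    ultimately show "0 \<le> f p - m * B p"
      using inner[of p] nonneg annulus_barrier_inner[OF r, of p q] annulus_barrier_outer[of p q R r]
      unfolding B_def by auto
  next
    fix p assume p: "p \<in> interior K" "fst p > 0"
    from K_int[OF p] have "(fst p, snd p) \<in> H2" by simp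
    note f_lines = Ck_on_2_line_derivatives[OF C2 this, unfolded prod.collapse]
    note B_lines = annulus_barrier_partials(1-4)[of q r R p, folded B_def]
    show "((\<lambda>t. f (t, snd p) - m * B (t, snd p)) has_real_derivative pdx f p - m * pdx B p) (at (fst p)) \<and>
        ((\<lambda>t. pdx f (t, snd p) - m * pdx B (t, snd p)) has_real_derivative
           pdx (pdx f) p - m * pdx (pdx B) p) (at (fst p)) \<and>
        ((\<lambda>t. f (fst p, t) - m * B (fst p, t)) has_real_derivative pdy f p - m * pdy B p) (at (snd p)) \<and>
        ((\<lambda>t. pdy f (fst p, t) - m * pdy B (fst p, t)) has_real_derivative
           pdy (pdy f) p - m * pdy (pdy B) p) (at (snd p))"
      using f_lines B_lines by (intro conjI DERIV_diff DERIV_cmult)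
    have "0 < pdx (pdx B) p + pdy (pdy B) p + 3 * pdx B p / fst p"
      unfolding B_def by (rule annulus_barrier_strict_subsolution[OF r q p(2) K_int(2)[OF p]])
    moreover have "pdx (pdx f) p - m * pdx (pdx B) p + (pdy (pdy f) p - m * pdy (pdy B) p)
        + 3 * (pdx f p - m * pdx B p) / fst p
        = (pdx (pdx f) p + pdy (pdy f) p + 3 * pdx f p / fst p)
          - m * (pdx (pdx B) p + pdy (pdy B) p + 3 * pdx B p / fst p)"
      by (simp add: diff_divide_distrib algebra_simps)
    ultimately show "pdx (pdx f) p - m * pdx (pdx B) p + (pdy (pdy f) p - m * pdy (pdy B) p)
        + 3 * (pdx f p - m * pdx B p) / fst p < 0"
      using pde K_int(1)[OF p] m by simp
  qed
  then show ?thesis by (simp add: B_def)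
qed

lemma min_annulus_barrier_le:
  fixes f :: "real \<times> real \<Rightarrow> real" and q :: "real \<times> real"
  assumes cont: "continuous_on H2bar f" and C2: "Ck_on 2 H2 f"
    and pde: "\<forall>p\<in>H2. pdx (pdx f) p + pdy (pdy f) p + 3 * pdx f p / fst p = 0"
    and nonneg: "\<forall>p\<in>H2. f p \<ge> 0"
    and q: "fst q > 0" and r: "0 < r" "r < R" and m: "m > 0"
    and inner: "\<And>p. dist p q \<le> r \<Longrightarrow> p \<in> H2 \<and> m \<le> f p"
    and z: "z \<in> H2"
  shows "min m (m * annulus_barrier q r R z) \<le> f z"
proof -
  consider "dist z q \<le> r" | "r \<le> dist z q" "dist z q \<le> R" | "R < dist z q" by linarith
  then show ?thesis
  proof cases
    case 1
    then show ?thesis using inner[of z] by (simp add: min.coboundedI1)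
  next
    case 2
    have "m \<le> f p" if "dist p q = r" for p
      using inner[of p] that by simp
    with ge_annulus_barrier[OF cont C2 pde nonneg q r m _ z 2]
    show ?thesis by (simp add: min.coboundedI2)
  next
    case 3
    then have "annulus_barrier q r R z \<le> 0"
      using annulus_barrier_pos_iff[OF r, of q z] by linarith
    then have "m * annulus_barrier q r R z \<le> f z"
      using m nonneg z by (meson mult_nonneg_nonpos less_imp_le order_trans)
    then show ?thesis by (simp add: min.coboundedI2)
  qed
qed

lemma positive_on_H2bar:
  fixes f :: "real \<times> real \<Rightarrow> real"
  assumes cont: "continuous_on H2bar f" and C2: "Ck_on 2 H2 f"
    and pde: "\<forall>p\<in>H2. pdx (pdx f) p + pdy (pdy f) p + 3 * pdx f p / fst p = 0"
    and nonneg: "\<forall>p\<in>H2. f p \<ge> 0"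
    and q: "q \<in> H2" "f q > 0" and p: "p \<in> H2bar"
  shows "f p > 0"
proof -
  have "q \<in> H2bar" using q(1) by (simp add: H2_def H2bar_def)
  with cont q(2) obtain r0 where r0: "r0 > 0"
    "\<And>z. z \<in> H2bar \<Longrightarrow> dist z q < r0 \<Longrightarrow> dist (f z) (f q) < f q / 2"
    unfolding continuous_on_iff by (meson half_gt_zero)
  define m where "m = f q / 2"
  define r where "r = min r0 (fst q) / 2"
  define R where "R = dist p q + 2 * r"
  have m: "m > 0" using q(2) by (simp add: m_def)
  have r: "0 < r" "r < r0" "r < fst q" using r0(1) q(1) by (auto simp: r_def H2_def)
  have R: "r < R" "dist p q < R" using r(1) by (auto simp: R_def add_pos_nonneg)
  have inner: "z \<in> H2 \<and> m \<le> f z" if "dist z q \<le> r" for z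
  proof
    have "\<bar>fst z - fst q\<bar> \<le> dist z q" by (metis dist_fst_le dist_real_def)
    then show "z \<in> H2" using that r by (simp add: H2_def)
    then have "dist (f z) (f q) < f q / 2" using r0(2)[of z] that r by (simp add: H2_def H2bar_def)
    then show "m \<le> f z" unfolding m_def dist_real_def by linarith
  qed
  define \<beta> where "\<beta> z = min m (m * annulus_barrier q r R z)" for z
  have "fst q > 0" using q(1) by (simp add: H2_def)
  with min_annulus_barrier_le[OF cont C2 pde nonneg _ r(1) R(1) m inner]
  have "0 \<le> f z - \<beta> z" if "z \<in> H2" for z
    using that by (simp add: \<beta>_def)
  moreover have "continuous_on (closure H2) (\<lambda>z. f z - \<beta> z)"
    unfolding closure_H2 \<beta>_def by (intro continuous_intros cont continuous_on_annulus_barrier)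
  ultimately have "0 \<le> f p - \<beta> p"
    using continuous_ge_on_closure[of H2 "\<lambda>z. f z - \<beta> z" p 0] p by (simp add: closure_H2)
  moreover have "0 < \<beta> p"
    using m annulus_barrier_pos_iff[OF r(1) R(1)] R(2) by (simp add: \<beta>_def)
  ultimately show ?thesis by simp
qed

section \<open>The extension of \<open>\<phi> / x\<^sup>2\<close>\<close>

lemma pdx_eq_fst_mult_continuous:
  assumes C2: "Ck_closure 2 H2 \<phi>"
    and pde: "\<forall>p\<in>H2. pdx (pdx \<phi>) p + pdy (pdy \<phi>) p - pdx \<phi> p / fst p = 0"
  obtains G where "continuous_on H2bar G" "\<forall>p\<in>H2. pdx \<phi> p = fst p * G p"
proof -
  have ext: "\<exists>g. continuous_on H2bar g \<and> (\<forall>p\<in>H2. g p = iterpd ds \<phi> p)" if "length ds \<le> 2" for ds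
    using C2 that unfolding Ck_closure_def closure_H2 by blast
  obtain Gxx where Gxx: "continuous_on H2bar Gxx" "\<forall>p\<in>H2. Gxx p = pdx (pdx \<phi>) p"
    using ext[of "[True, True]"] by auto
  obtain Gyy where Gyy: "continuous_on H2bar Gyy" "\<forall>p\<in>H2. Gyy p = pdy (pdy \<phi>) p"
    using ext[of "[False, False]"] by auto
  show thesis
  proof
    show "continuous_on H2bar (\<lambda>p. Gxx p + Gyy p)" using Gxx(1) Gyy(1) by (rule continuous_on_add)
    show "\<forall>p\<in>H2. pdx \<phi> p = fst p * (Gxx p + Gyy p)"
      using pde Gxx(2) Gyy(2) by (auto simp: H2_def field_simps)
  qed
qed

lemma div_square_eq_half_mean_value:
  fixes \<phi> G :: "real \<times> real \<Rightarrow> real"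
  assumes cont: "continuous_on H2bar \<phi>" and diff: "\<forall>p\<in>H2. partials_exist_at \<phi> p"
    and bdry: "\<phi> (0, y) = 0" and pdx_eq: "\<forall>p\<in>H2. pdx \<phi> p = fst p * G p" and x: "x > 0"
  obtains \<xi> where "0 < \<xi>" "\<xi> < x" "\<phi> (x, y) / x\<^sup>2 = G (\<xi>, y) / 2"
proof -
  define h where "h t = \<phi> (t, y) * x\<^sup>2 - t\<^sup>2 * \<phi> (x, y)" for t
  have "continuous_on {0..x} (\<lambda>t. \<phi> (t, y))"
    by (rule continuous_on_compose2[OF cont, of _ "\<lambda>t. (t, y)"])
       (auto intro!: continuous_intros simp: H2bar_def)
  then have "continuous_on {0..x} h" unfolding h_def by (intro continuous_intros)
  moreover have dh: "(h has_real_derivative (t * G (t, y) * x\<^sup>2 - 2 * t * \<phi> (x, y))) (at t)"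
    if "t > 0" for t
    using partials_exist_atD(1)[of \<phi> "(t, y)"] diff pdx_eq that unfolding h_def
    by (auto intro!: derivative_eq_intros simp: H2_def)
  ultimately obtain l \<xi> where \<xi>: "0 < \<xi>" "\<xi> < x" "(h has_real_derivative l) (at \<xi>)" "h x - h 0 = (x - 0) * l"
    using MVT[OF x] by (metis real_differentiable_def)
  have "l = 0" using \<xi>(4) bdry x by (simp add: h_def)
  then have "\<xi> * (G (\<xi>, y) * x\<^sup>2 - 2 * \<phi> (x, y)) = 0"
    using DERIV_unique[OF \<xi>(3) dh[OF \<xi>(1)]] by (simp add: algebra_simps)
  then have "\<phi> (x, y) / x\<^sup>2 = G (\<xi>, y) / 2" using \<xi>(1) x by (simp add: field_simps)
  with \<xi>(1,2) show thesis by (rule that)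
qed

lemma continuous_on_div_square_extension:
  fixes \<phi> G :: "real \<times> real \<Rightarrow> real"
  assumes cont_\<phi>: "continuous_on H2bar \<phi>" and cont_G: "continuous_on H2bar G"
    and mean_value: "\<And>x y. x > 0 \<Longrightarrow> \<exists>\<xi>. 0 < \<xi> \<and> \<xi> < x \<and> \<phi> (x, y) / x\<^sup>2 = G (\<xi>, y) / 2"
  shows "continuous_on H2bar (\<lambda>p. if fst p > 0 then \<phi> p / (fst p)\<^sup>2 else G p / 2)"
    (is "continuous_on _ ?f")
  unfolding continuous_on_iff
proof (intro ballI allI impI)
  fix p e assume p: "p \<in> H2bar" and e: "(e::real) > 0"
  show "\<exists>d>0. \<forall>p'\<in>H2bar. dist p' p < d \<longrightarrow> dist (?f p') (?f p) < e"
  proof (cases "fst p > 0")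
    case True
    have "continuous_on H2 (\<lambda>p. \<phi> p / (fst p)\<^sup>2)"
      by (intro continuous_intros continuous_on_subset[OF cont_\<phi>]) (auto simp: H2_def H2bar_def)
    then obtain d where d: "d > 0" "\<And>p'. p' \<in> H2 \<Longrightarrow> dist p' p < d \<Longrightarrow>
        dist (\<phi> p' / (fst p')\<^sup>2) (\<phi> p / (fst p)\<^sup>2) < e"
      using e True unfolding continuous_on_iff H2_def by fastforce
    show ?thesis
    proof (intro exI[of _ "min d (fst p)"] conjI ballI impI)
      show "min d (fst p) > 0" using d True by simp
      fix p' assume "dist p' p < min d (fst p)"
      moreover have "\<bar>fst p' - fst p\<bar> \<le> dist p' p" by (metis dist_fst_le dist_real_def)
      ultimately have "fst p' > 0" "dist p' p < d" by auto
      then show "dist (?f p') (?f p) < e" using d(2)[of p'] True by (simp add: H2_def)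
    qed
  next
    case False
    then have p0: "fst p = 0" using p by (simp add: H2bar_def)
    obtain d where d: "d > 0" "\<And>p'. p' \<in> H2bar \<Longrightarrow> dist p' p < d \<Longrightarrow> dist (G p') (G p) < e"
      using cont_G e p unfolding continuous_on_iff by blast
    \<comment> \<open>Every value of the extension near \<open>p\<close> is a value of \<open>G / 2\<close> at a point no farther from \<open>p\<close>.\<close>
    have closer: "\<exists>p''\<in>H2bar. dist p'' p \<le> dist p' p \<and> ?f p' = G p'' / 2" if "p' \<in> H2bar" for p'
    proof (cases "fst p' > 0")
      case True
      obtain \<xi> where \<xi>: "0 < \<xi>" "\<xi> < fst p'" "\<phi> p' / (fst p')\<^sup>2 = G (\<xi>, snd p') / 2"
        using mean_value[OF True, of "snd p'"] by auto
      have "\<xi>\<^sup>2 \<le> (fst p')\<^sup>2" using \<xi> by (simp add: power_mono)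
      then have "dist (\<xi>, snd p') p \<le> dist p' p"
        using p0 by (cases p, cases p') (simp add: dist_Pair_Pair dist_real_def)
      then show ?thesis using \<xi> True by (intro bexI[of _ "(\<xi>, snd p')"]) (auto simp: H2bar_def)
    qed (use that in auto)
    show ?thesis
    proof (intro exI[of _ d] conjI ballI impI)
      fix p' assume "p' \<in> H2bar" "dist p' p < d"
      with closer obtain p'' where "p'' \<in> H2bar" "dist p'' p < d" "?f p' = G p'' / 2"
        by (meson le_less_trans)
      with d(2)[of p''] p0 e show "dist (?f p') (?f p) < e" by (simp add: dist_real_def)
    qed (rule d(1))
  qed
qed

lemma operator_div_square:
  assumes C2: "Ck_on 2 H2 \<phi>" and f: "\<forall>p\<in>H2. f p = \<phi> p / (fst p)\<^sup>2" and x: "x > 0"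
  shows "pdx (pdx f) (x, y) + pdy (pdy f) (x, y) + 3 * pdx f (x, y) / x
       = (pdx (pdx \<phi>) (x, y) + pdy (pdy \<phi>) (x, y) - pdx \<phi> (x, y) / x) / x\<^sup>2"
proof -
  note \<phi>_lines = Ck_on_2_line_derivatives[OF C2, unfolded H2_def, simplified]
  have fx: "pdx f (t, y) = pdx \<phi> (t, y) / t\<^sup>2 - 2 * \<phi> (t, y) / t ^ 3" if t: "t > 0" for t
  proof -
    have "((\<lambda>s. \<phi> (s, y) / s\<^sup>2) has_real_derivative pdx \<phi> (t, y) / t\<^sup>2 - 2 * \<phi> (t, y) / t ^ 3) (at t)"
      using \<phi>_lines(1)[OF t] t by (auto intro!: derivative_eq_intros simp: field_simps eval_nat_numeral)
    then have "((\<lambda>s. f (s, y)) has_real_derivative pdx \<phi> (t, y) / t\<^sup>2 - 2 * \<phi> (t, y) / t ^ 3) (at t)"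
      by (rule has_field_derivative_transform_within_open[where S = "{0<..}"])
         (use t f in \<open>auto simp: H2_def\<close>)
    then show ?thesis by (simp add: pdx_def DERIV_imp_deriv)
  qed
  have "((\<lambda>s. pdx \<phi> (s, y) / s\<^sup>2 - 2 * \<phi> (s, y) / s ^ 3) has_real_derivative
      pdx (pdx \<phi>) (x, y) / x\<^sup>2 - 4 * pdx \<phi> (x, y) / x ^ 3 + 6 * \<phi> (x, y) / x ^ 4) (at x)"
    using \<phi>_lines(1,2)[OF x] x by (auto intro!: derivative_eq_intros simp: field_simps eval_nat_numeral)
  then have "((\<lambda>s. pdx f (s, y)) has_real_derivative
      pdx (pdx \<phi>) (x, y) / x\<^sup>2 - 4 * pdx \<phi> (x, y) / x ^ 3 + 6 * \<phi> (x, y) / x ^ 4) (at x)"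
    by (rule has_field_derivative_transform_within_open[where S = "{0<..}"]) (use x fx in auto)
  then have fxx: "pdx (pdx f) (x, y)
      = pdx (pdx \<phi>) (x, y) / x\<^sup>2 - 4 * pdx \<phi> (x, y) / x ^ 3 + 6 * \<phi> (x, y) / x ^ 4"
    by (simp add: pdx_def[of "pdx f"] DERIV_imp_deriv)
  have f_line: "(\<lambda>s. f (x, s)) = (\<lambda>s. \<phi> (x, s) / x\<^sup>2)" using f x by (auto simp: H2_def)
  have fy: "pdy f (x, t) = pdy \<phi> (x, t) / x\<^sup>2" for t
    using DERIV_cdivide[OF \<phi>_lines(3)[OF x], of "x\<^sup>2"]
    by (simp add: pdy_def f_line DERIV_imp_deriv)
  have fyy: "pdy (pdy f) (x, y) = pdy (pdy \<phi>) (x, y) / x\<^sup>2"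
    using DERIV_cdivide[OF \<phi>_lines(4)[OF x], of "x\<^sup>2"]
    by (simp add: pdy_def[of "pdy f"] fy DERIV_imp_deriv)
  show ?thesis
    unfolding fxx fyy fx[OF x] using x by (simp add: field_simps eval_nat_numeral)
qed

lemma Cinf_on_div_square:
  assumes "Cinf_on H2 \<phi>" "\<forall>p\<in>H2. f p = \<phi> p / (fst p)\<^sup>2"
  shows "Cinf_on H2 f"
  unfolding Cinf_on_def
proof
  fix k
  have "Ck_on k H2 (\<lambda>p. \<phi> p * (1 / fst p ^ 2))"
    using assms(1) Ck_on_divide_fst_power
    by (intro Ck_on_mult[OF open_H2]) (auto simp: Cinf_on_def)
  then show "Ck_on k H2 f"
    using Ck_on_cong_open[OF open_H2, of f "\<lambda>p. \<phi> p * (1 / fst p ^ 2)" k] assms(2) by simp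
qed

theorem lemma4p1:
  fixes \<phi> :: "real \<times> real \<Rightarrow> real"
  assumes C2: "Ck_closure 2 H2 \<phi>"
    and smooth: "Cinf_on H2 \<phi>"
    and nonneg: "\<forall>p\<in>H2bar. \<phi> p \<ge> 0"
    and nonzero: "\<exists>p\<in>H2bar. \<phi> p \<noteq> 0"
    and bdry: "\<forall>y. \<phi> (0, y) = 0"
    and pde: "\<forall>p\<in>H2. pdx (pdx \<phi>) p + pdy (pdy \<phi>) p - pdx \<phi> p / fst p = 0"
  shows "\<exists>f. continuous_on H2bar f \<and> Cinf_on H2 f \<and>
             (\<forall>p\<in>H2. f p = \<phi> p / (fst p)\<^sup>2) \<and>
             (\<forall>p\<in>H2. pdx (pdx f) p + pdy (pdy f) p + 3 * pdx f p / fst p = 0) \<and>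
             (\<forall>p\<in>H2bar. f p > 0)"
proof -
  have C2_\<phi>: "Ck_on 2 H2 \<phi>" and cont_\<phi>: "continuous_on H2bar \<phi>"
    using C2 unfolding Ck_closure_def closure_H2 by auto
  then have diff_\<phi>: "\<forall>p\<in>H2. partials_exist_at \<phi> p" by (simp add: numeral_2_eq_2 Ck_on_Suc_iff)
  obtain G where cont_G: "continuous_on H2bar G" and G: "\<forall>p\<in>H2. pdx \<phi> p = fst p * G p"
    using pdx_eq_fst_mult_continuous[OF C2 pde] by blast
  define f where "f p = (if fst p > 0 then \<phi> p / (fst p)\<^sup>2 else G p / 2)" for p
  have f_H2: "\<forall>p\<in>H2. f p = \<phi> p / (fst p)\<^sup>2" by (simp add: f_def H2_def)
  have cont_f: "continuous_on H2bar f"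
    unfolding f_def[abs_def]
    using div_square_eq_half_mean_value[OF cont_\<phi> diff_\<phi> bdry[rule_format] G]
    by (intro continuous_on_div_square_extension[OF cont_\<phi> cont_G]) metis
  have smooth_f: "Cinf_on H2 f" by (rule Cinf_on_div_square[OF smooth f_H2])
  have pde_f: "\<forall>p\<in>H2. pdx (pdx f) p + pdy (pdy f) p + 3 * pdx f p / fst p = 0"
    using operator_div_square[OF C2_\<phi> f_H2] pde by (auto simp: H2_def)
  obtain q where q: "q \<in> H2bar" "\<phi> q \<noteq> 0" using nonzero by blast
  have "fst q \<noteq> 0" using q(2) bdry by (metis prod.collapse)
  with q(1) have "q \<in> H2" by (simp add: H2_def H2bar_def)
  moreover have "\<phi> q > 0" using q nonneg by (simp add: order_le_neq_trans)
  ultimately have "f q > 0" using f_H2 \<open>fst q \<noteq> 0\<close> by simp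
  moreover have "Ck_on 2 H2 f" using smooth_f by (simp add: Cinf_on_def)
  moreover have "\<forall>p\<in>H2. f p \<ge> 0" using nonneg f_H2 by (simp add: H2_def H2bar_def)
  ultimately have "\<forall>p\<in>H2bar. f p > 0"
    using positive_on_H2bar[OF cont_f _ pde_f _ \<open>q \<in> H2\<close>] by blast
  with cont_f smooth_f f_H2 pde_f show ?thesis by blast
qed

end
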